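(* Let $d\ge3$, $\mathcal D=\mathbb S_1^{d-1}$, $M\in\mathrm{SL}(d+1,\mathbb R)$, $K=\mathcal G_{\mathcal D}(M)$, and let $(u_1,\vec v_1),\dots,(u_K,\vec v_K)\in\mathcal Q_{\mathcal D}(M)$ satisfy (V1)–(V3). If $1\le i,j\le K$ and either $-1<u_i<u_j\le-1/2$ or $1/2\le u_j<u_i<1$, then the angle between $\vec v_i$ and $\vec v_j$ is greater than $\pi/3$.
   Context: $\mathbb S_1^{d-1}$ is the unit sphere. Row vectors in $\mathbb R^{d+1}$ are written $(u,\vec v)$, $u\in\mathbb R$, $\vec v\in\mathbb R^d$; $\mathbb Z^{d+1}M=\{\vec mM:\vec m\in\mathbb Z^{d+1}\}$. For $\mathcal D\subseteq\mathbb S_1^{d-1}$: $\mathcal Q_{\mathcal D}(M,t)=\{(u,\vec v)\in\mathbb Z^{d+1}M:-t<u<1-t,\ \vec v\in\mathbb R_{>0}\mathcal D\}$ for $t\in(0,1)$; $\mathcal Q_{\mathcal D}(M)=\{(u,\vec v)\in\mathbb Z^{d+1}M:|u|<1,\ \vec v\in\mathbb R_{>0}\mathcal D\}$; $F_{\mathcal D}(M,t)=\min\{|\vec v|:(u,\vec v)\in\mathcal Q_{\mathcal D}(M,t)\}$; $\mathcal F_{\mathcal D}(M)=\{F_{\mathcal D}(M,t):0<t<1\}$, $\mathcal G_{\mathcal D}(M)=|\mathcal F_{\mathcal D}(M)|$. Conditions: (V1) $0<|\vec v_1|<\cdots<|\vec v_K|$; (V2) each $\delta\in\mathcal F_{\mathcal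 D}(M)$ equals $|\vec v_i|$ for some $i$; (V3) for each $i$ there is $t\in(0,1)$ with $(u_i,\vec v_i)\in\mathcal Q_{\mathcal D}(M,t)$ and $|\vec v_i|=F_{\mathcal D}(M,t)$. *)

theory Defs
  imports "HOL-Analysis.Analysis"
begin

text \<open>Row vectors in R^(d+1) are modelled as real^('n option), where CARD('n) = d.
  The coordinate None is the first coordinate u, the coordinates Some i form vec v in R^d.\<close>

definition ucomp :: "real ^ ('n::finite option) \<Rightarrow> real" where
  "ucomp w = w $ None"

definition vcomp :: "real ^ ('n::finite option) \<Rightarrow> real ^ 'n" where
  "vcomp w = (\<chi> i. w $ Some i)"

definition lattice :: "real ^ ('n::finite option) ^ ('n option) \<Rightarrow> (real ^ ('n option)) set" where
  "lattice M = {m v* M | m. \<forall>i. m $ i \<in> \<int>}"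

definition pos_cone :: "(real ^ 'n) set \<Rightarrow> (real ^ 'n) set" where
  "pos_cone D = {c *\<^sub>R x | c x. c > 0 \<and> x \<in> D}"

definition QDt :: "(real ^ ('n::finite)) set \<Rightarrow> real ^ ('n option) ^ ('n option) \<Rightarrow> real \<Rightarrow> (real ^ ('n option)) set" where
  "QDt D M t = {w \<in> lattice M. - t < ucomp w \<and> ucomp w < 1 - t \<and> vcomp w \<in> pos_cone D}"

definition QD :: "(real ^ ('n::finite)) set \<Rightarrow> real ^ ('n option) ^ ('n option) \<Rightarrow> (real ^ ('n option)) set" where
  "QD D M = {w \<in> lattice M. \<bar>ucomp w\<bar> < 1 \<and> vcomp w \<in> pos_cone D}"

text \<open>F_D(M,t) = min of |v| over Q_D(M,t) (the minimum exists by discreteness; we write Inf).\<close>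
definition FD :: "(real ^ ('n::finite)) set \<Rightarrow> real ^ ('n option) ^ ('n option) \<Rightarrow> real \<Rightarrow> real" where
  "FD D M t = Inf ((\<lambda>w. norm (vcomp w)) ` QDt D M t)"

definition FFD :: "(real ^ ('n::finite)) set \<Rightarrow> real ^ ('n option) ^ ('n option) \<Rightarrow> real set" where
  "FFD D M = {FD D M t | t. 0 < t \<and> t < 1}"

definition GD :: "(real ^ ('n::finite)) set \<Rightarrow> real ^ ('n option) ^ ('n option) \<Rightarrow> nat" where
  "GD D M = card (FFD D M)"

definition vec_angle :: "real ^ 'n \<Rightarrow> real ^ 'n \<Rightarrow> real" where
  "vec_angle x y = arccos ((x \<bullet> y) / (norm x * norm y))"

end

theory Submission
  imports Defs
begin

text \<open>Let \<open>w\<^sub>k\<close> be the one of \<open>w\<^sub>i, w\<^sub>j\<close> with the longer \<open>v\<close>-part; by (V3) it realises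
  \<open>F(M,t)\<close> for some \<open>t\<close>. The hypothesis on \<open>u\<^sub>i, u\<^sub>j\<close> keeps \<open>u\<^sub>i - u\<^sub>j\<close> inside the window
  \<open>(-t, 1-t)\<close>, so the lattice vector \<open>w\<^sub>i - w\<^sub>j\<close> competes in \<open>Q(M,t)\<close>. If the angle between
  \<open>v\<^sub>i\<close> and \<open>v\<^sub>j\<close> were at most \<open>\<pi>/3\<close>, then, as their lengths differ by (V1),
  \<open>|v\<^sub>i - v\<^sub>j| < max |v\<^sub>i| |v\<^sub>j|\<close>, contradicting the minimality of \<open>w\<^sub>k\<close>.\<close>

lemma lattice_diff:
  assumes "x \<in> lattice M" "y \<in> lattice M"
  shows "x - y \<in> lattice M"
proof -
  obtain a where a: "x = a v* M" "\<forall>i. a $ i \<in> \<int>" using assms(1) unfolding lattice_def by blast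
  obtain b where b: "y = b v* M" "\<forall>i. b $ i \<in> \<int>" using assms(2) unfolding lattice_def by blast
  have "x - y = (a - b) v* M" using a b by (simp only: vector_matrix_mult_diff_distrib)
  moreover have "\<forall>i. (a - b) $ i \<in> \<int>" using a b by (simp add: Ints_diff)
  ultimately show ?thesis unfolding lattice_def by blast
qed

lemma ucomp_diff: "ucomp (x - y) = ucomp x - ucomp y"
  by (simp add: ucomp_def)

lemma vcomp_diff: "vcomp (x - y) = vcomp x - vcomp y"
  by (simp add: vcomp_def vec_eq_iff)

lemma pos_cone_sphere: "(v::real^'n) \<in> pos_cone (sphere 0 1) \<longleftrightarrow> v \<noteq> 0"
proof
  assume "v \<in> pos_cone (sphere 0 1)"
  then obtain c x where "v = c *\<^sub>R x" "c > 0" "x \<in> sphere 0 1" unfolding pos_cone_def by blast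
  then show "v \<noteq> 0" by auto
next
  assume "v \<noteq> 0"
  then have "v = norm v *\<^sub>R (v /\<^sub>R norm v)" "norm v > 0" "v /\<^sub>R norm v \<in> sphere 0 1" by simp_all
  then show "v \<in> pos_cone (sphere 0 1)" unfolding pos_cone_def by blast
qed

lemma FD_le_norm_vcomp:
  assumes "y \<in> QDt D M t"
  shows "FD D M t \<le> norm (vcomp y)"
  unfolding FD_def using assms by (intro cInf_lower bdd_belowI[where m=0]) auto

lemma FD_sphere_le_norm_vcomp_diff:
  assumes "x \<in> lattice M" "y \<in> lattice M" "vcomp x \<noteq> vcomp y"
    and "- t < ucomp x - ucomp y" "ucomp x - ucomp y < 1 - t"
  shows "FD (sphere 0 1) M t \<le> norm (vcomp x - vcomp y)"
proof -
  have "x - y \<in> QDt (sphere 0 1) M t"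
    using assms lattice_diff by (simp add: QDt_def pos_cone_sphere ucomp_diff vcomp_diff)
  then show ?thesis using FD_le_norm_vcomp vcomp_diff by metis
qed

lemma diff_in_window_if_one_in_window:
  fixes a b c t :: real
  assumes "(- 1 < a \<and> a < b \<and> b \<le> - 1 / 2) \<or> (1 / 2 \<le> b \<and> b < a \<and> a < 1)"
    and "c = a \<or> c = b" "- t < c" "c < 1 - t" "0 < t" "t < 1"
  shows "- t < a - b \<and> a - b < 1 - t"
  using assms by (elim disjE conjE; linarith)

lemma norm_mult_le_two_inner_if_vec_angle_le:
  fixes a b :: "real^'n"
  assumes "a \<noteq> 0" "b \<noteq> 0" "vec_angle a b \<le> pi / 3"
  shows "norm a * norm b \<le> 2 * (a \<bullet> b)"
proof -
  let ?c = "(a \<bullet> b) / (norm a * norm b)"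
  have pos: "norm a * norm b > 0" using assms by simp
  have "\<bar>a \<bullet> b\<bar> \<le> norm a * norm b" by (rule Cauchy_Schwarz_ineq2)
  then have c_bounds: "-1 \<le> ?c" "?c \<le> 1" using pos by (auto simp: divide_simps abs_le_iff)
  have "cos (pi / 3) \<le> cos (arccos ?c)"
    using assms(3) c_bounds unfolding vec_angle_def
    by (intro cos_monotone_0_pi_le) (auto intro: arccos_lbound)
  then have "1 / 2 \<le> ?c" using c_bounds by (simp add: cos_arccos cos_60)
  then show ?thesis using pos by (simp add: divide_simps)
qed

lemma norm_diff_less_max_norm:
  fixes a b :: "'a::real_inner"
  assumes "a \<noteq> 0" "b \<noteq> 0" "norm a \<noteq> norm b" "norm a * norm b \<le> 2 * (a \<bullet> b)"
  shows "norm (a - b) < max (norm a) (norm b)"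
proof -
  have "(norm (a - b))\<^sup>2 = (norm a)\<^sup>2 + (norm b)\<^sup>2 - 2 * (a \<bullet> b)"
    by (simp add: power2_norm_eq_inner inner_diff algebra_simps inner_commute)
  also have "\<dots> \<le> (norm a)\<^sup>2 + (norm b)\<^sup>2 - norm a * norm b" using assms(4) by simp
  also have "\<dots> < (max (norm a) (norm b))\<^sup>2"
    using assms by (cases "norm a \<le> norm b")
      (auto simp: max_def power2_eq_square algebra_simps intro: mult_strict_right_mono)
  finally show ?thesis by (smt (verit) power_mono norm_ge_zero)
qed

theorem proposition6p3:
  fixes M :: "real ^ ('n::finite option) ^ ('n option)"
    and w :: "nat \<Rightarrow> real ^ ('n option)"
    and K :: nat
  assumes d3: "CARD('n) \<ge> 3"
    and SL: "det M = 1"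
    and K_def: "K = GD (sphere (0::real ^ 'n) 1) M"
    and inQ: "\<forall>i\<in>{1..K}. w i \<in> QD (sphere 0 1) M"
    and V1pos: "K \<ge> 1 \<longrightarrow> 0 < norm (vcomp (w 1))"
    and V1mono: "\<forall>i\<in>{1..K}. \<forall>j\<in>{1..K}. i < j \<longrightarrow> norm (vcomp (w i)) < norm (vcomp (w j))"
    and V2: "\<forall>\<delta>\<in>FFD (sphere 0 1) M. \<exists>i\<in>{1..K}. \<delta> = norm (vcomp (w i))"
    and V3: "\<forall>i\<in>{1..K}. \<exists>t. 0 < t \<and> t < 1 \<and> w i \<in> QDt (sphere 0 1) M t
               \<and> norm (vcomp (w i)) = FD (sphere 0 1) M t"
    and ij: "i \<in> {1..K}" "j \<in> {1..K}"
    and u: "(- 1 < ucomp (w i) \<and> ucomp (w i) < ucomp (w j) \<and> ucomp (w j) \<le> - 1 / 2)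
          \<or> (1 / 2 \<le> ucomp (w j) \<and> ucomp (w j) < ucomp (w i) \<and> ucomp (w i) < 1)"
  shows "vec_angle (vcomp (w i)) (vcomp (w j)) > pi / 3"
proof (rule ccontr)
  assume angle: "\<not> ?thesis"
  have "i \<noteq> j" using u by auto
  then have norms_differ: "norm (vcomp (w i)) \<noteq> norm (vcomp (w j))"
    using V1mono ij by (metis less_irrefl nat_neq_iff)
  have lat: "w i \<in> lattice M" "w j \<in> lattice M" and nonzero: "vcomp (w i) \<noteq> 0" "vcomp (w j) \<noteq> 0"
    using inQ ij unfolding QD_def pos_cone_sphere by blast+
  obtain k where k: "k \<in> {i, j}" "norm (vcomp (w k)) = max (norm (vcomp (w i))) (norm (vcomp (w j)))"
    by (metis insertI1 insertI2 max_def)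
  then obtain t where t: "0 < t" "t < 1" "w k \<in> QDt (sphere 0 1) M t" "norm (vcomp (w k)) = FD (sphere 0 1) M t"
    using V3 ij by blast
  have "- t < ucomp (w i) - ucomp (w j) \<and> ucomp (w i) - ucomp (w j) < 1 - t"
    using diff_in_window_if_one_in_window[OF u] k(1) t(1-3) unfolding QDt_def by blast
  then have "FD (sphere 0 1) M t \<le> norm (vcomp (w i) - vcomp (w j))"
    using FD_sphere_le_norm_vcomp_diff lat norms_differ by metis
  moreover have "norm (vcomp (w i) - vcomp (w j)) < norm (vcomp (w k))"
    using norm_diff_less_max_norm[OF nonzero norms_differ] norm_mult_le_two_inner_if_vec_angle_le[OF nonzero] angle k(2)
    by simp
  ultimately show False using t(4) by linarith
qed

end
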